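(* Let $\mathbf{A}\in\mathbb{R}^{m\times n}$ and $\mathbf{c}\in\mathbb{R}^m$ be such that $\|\mathbf{A}^\top\mathbf{c}\|_2^2$ is an integer. If $\mathbf{A}^\top\mathbf{c}\neq\mathbf{0}$, then $$\|\boldsymbol{\Pi}_{\mathbf{A}}\mathbf{c}\|_2^2\ \ge\ \frac{1}{\sigma_{\max}^2(\mathbf{A})}=\frac{1}{\lambda_{\max}(\mathbf{A}^\top\mathbf{A})}.$$
   Context: $\boldsymbol{\Pi}_{\mathbf{A}}=\mathbf{A}(\mathbf{A}^\top\mathbf{A})^{\dagger}\mathbf{A}^\top$ is the orthogonal projection onto the image of $\mathbf{A}$ ($\dagger$ = Moore–Penrose pseudoinverse); $\sigma_{\max}(\mathbf{A})$ is the largest singular value of $\mathbf{A}$ and $\lambda_{\max}$ the largest eigenvalue. *)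

theory Defs
  imports "HOL-Analysis.Analysis"
begin

definition is_pinv :: "real^'n^'m \<Rightarrow> real^'m^'n \<Rightarrow> bool" where
  "is_pinv M X \<longleftrightarrow> M ** X ** M = M \<and> X ** M ** X = X \<and>
     transpose (M ** X) = M ** X \<and> transpose (X ** M) = X ** M"

definition pinv :: "real^'n^'m \<Rightarrow> real^'m^'n" where
  "pinv M = (THE X. is_pinv M X)"

definition proj_img :: "real^'n^'m \<Rightarrow> real^'m^'m" where
  "proj_img A = A ** pinv (transpose A ** A) ** transpose A"

definition eigenvalues :: "real^'n^'n \<Rightarrow> real set" where
  "eigenvalues M = {\<mu>. \<exists>v. v \<noteq> 0 \<and> M *v v = \<mu> *\<^sub>R v}"

definition lambda_max :: "real^'n^'n \<Rightarrow> real" where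
  "lambda_max M = Max (eigenvalues M)"

definition singular_values :: "real^'n^'m \<Rightarrow> real set" where
  "singular_values A = sqrt ` eigenvalues (transpose A ** A)"

definition sigma_max :: "real^'n^'m \<Rightarrow> real" where
  "sigma_max A = Max (singular_values A)"

end

theory Submission
  imports Defs
begin

text \<open>Let M = A^T A and b = A^T c. Since b is orthogonal to the kernel of M, the Penrose
  equations show that y = M^+ b solves M y = b, and Pi_A c = A y. Cauchy-Schwarz and the Rayleigh
  bound |A x|^2 <= lambda_max |x|^2 then give
  |b|^2 = (A y) \<bullet> (A b) <= |A y| |A b| <= |A y| sqrt lambda_max |b|, so
  lambda_max |Pi_A c|^2 >= |b|^2 >= 1, the last step because |b|^2 is a positive integer.
  The eigenvalues of M are nonnegative, so sigma_max^2 = lambda_max.\<close>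

lemma transpose_mult_inner: "(transpose A *v u) \<bullet> v = u \<bullet> (A *v v)"
  for A :: "real^'n^'m"
  by (simp add: dot_lmul_matrix)

lemma symmetric_matrix_inner:
  fixes M :: "real^'n^'n"
  assumes "transpose M = M"
  shows "(M *v u) \<bullet> v = u \<bullet> (M *v v)"
  using transpose_mult_inner[of M u v] assms by simp

lemma symmetric_matrixI:
  fixes N :: "real^'n^'n"
  assumes "\<And>x y. (N *v x) \<bullet> y = x \<bullet> (N *v y)"
  shows "transpose N = N"
proof -
  have "(transpose N *v x - N *v x) \<bullet> y = 0" for x y
    using transpose_mult_inner[of N x y] assms by (simp add: inner_diff_left)
  then have "transpose N *v x = N *v x" for x
    by (metis inner_eq_zero_iff eq_iff_diff_eq_0)
  then show ?thesis by (simp add: matrix_eq)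
qed

lemma matrix_add_rdistrib: "(A + B) ** C = A ** C + B ** C"
  by (simp add: matrix_matrix_mult_def vec_eq_iff sum.distrib algebra_simps)

lemma matrix_diff_ldistrib: "A ** (B - C) = A ** B - A ** C"
  for A :: "'a::ring_1^'n^'m"
  by (simp add: matrix_matrix_mult_def vec_eq_iff sum_subtractf algebra_simps)

lemma matrix_diff_rdistrib: "(A - B) ** C = A ** C - B ** C"
  for A :: "'a::ring_1^'n^'m"
  by (simp add: matrix_matrix_mult_def vec_eq_iff sum_subtractf algebra_simps)

lemma transpose_diff: "transpose (A - B) = transpose A - transpose B"
  by (simp add: transpose_def vec_eq_iff)

lemma gram_quadratic_form: "x \<bullet> ((transpose A ** A) *v x) = (A *v x) \<bullet> (A *v x)"
  for A :: "real^'n^'m"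
  by (metis transpose_mult_inner inner_commute matrix_vector_mul_assoc)

lemma gram_kernel: "(transpose A ** A) *v x = 0 \<longleftrightarrow> A *v x = 0"
  for A :: "real^'n^'m"
  by (metis gram_quadratic_form inner_eq_zero_iff inner_zero_right
      matrix_vector_mul_assoc matrix_vector_mult_0_right)

subsection \<open>Orthogonal projections\<close>

definition is_orthogonal_projection :: "(real^'n) set \<Rightarrow> real^'n^'n \<Rightarrow> bool" where
  "is_orthogonal_projection S P \<longleftrightarrow>
     (\<forall>x. P *v x \<in> S) \<and> (\<forall>x. \<forall>s\<in>S. (x - P *v x) \<bullet> s = 0)"

lemma orthogonal_projection_exists:
  fixes S :: "(real^'n) set"
  assumes "subspace S"
  shows "\<exists>P. is_orthogonal_projection S P"
proof -
  obtain B where orth: "pairwise orthogonal B" and unit: "\<And>b. b \<in> B \<Longrightarrow> norm b = 1"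
    and indB: "independent B" and spanB: "span B = S"
    using orthonormal_basis_subspace[OF assms] by metis
  have finB: "finite B" using indB independent_imp_finite by blast
  define P :: "real^'n^'n" where "P = (\<chi> i j. \<Sum>b\<in>B. b$i * b$j)"
  have Pv: "P *v x = (\<Sum>b\<in>B. (b \<bullet> x) *\<^sub>R b)" for x
    unfolding P_def
    by (simp add: vec_eq_iff matrix_vector_mult_def inner_vec_def sum_component
        sum_distrib_left sum_distrib_right algebra_simps sum.swap[of _ B])
  have basis_inner: "b \<bullet> b' = (if b = b' then 1 else 0)" if "b \<in> B" "b' \<in> B" for b b'
    using that unit orth by (auto simp: dot_square_norm orthogonal_def pairwise_def)
  have "(P *v x) \<bullet> b' = x \<bullet> b'" if b': "b' \<in> B" for b' x
  proof -
    have "(P *v x) \<bullet> b' = (\<Sum>b\<in>B. (b \<bullet> x) * (b \<bullet> b'))"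
      by (simp add: Pv inner_sum_left)
    also have "\<dots> = (\<Sum>b\<in>B. if b = b' then b \<bullet> x else 0)"
      by (rule sum.cong) (simp_all add: basis_inner b')
    also have "\<dots> = b' \<bullet> x" using finB b' by simp
    finally show ?thesis by (simp add: inner_commute)
  qed
  then have "orthogonal (x - P *v x) s" if "s \<in> S" for x s
    by (intro orthogonal_to_span[of s B]) (use that spanB in \<open>auto simp: orthogonal_def inner_diff_left\<close>)
  moreover have "P *v x \<in> S" for x
    unfolding Pv spanB[symmetric] by (intro span_sum span_mul span_base)
  ultimately show ?thesis
    unfolding is_orthogonal_projection_def orthogonal_def by blast
qed

context
  fixes S :: "(real^'n) set" and P :: "real^'n^'n"
  assumes S: "subspace S" and P: "is_orthogonal_projection S P"
begin

lemma orthogonal_projection_fixes: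
  assumes "s \<in> S"
  shows "P *v s = s"
proof -
  have "s - P *v s \<in> S" using assms P S unfolding is_orthogonal_projection_def by (simp add: subspace_diff)
  then have "(s - P *v s) \<bullet> (s - P *v s) = 0" using P unfolding is_orthogonal_projection_def by blast
  then show ?thesis by simp
qed

lemma orthogonal_projection_idem: "P *v (P *v x) = P *v x"
  using P orthogonal_projection_fixes unfolding is_orthogonal_projection_def by blast

lemma orthogonal_projection_self_adjoint: "(P *v x) \<bullet> y = x \<bullet> (P *v y)"
proof -
  have "(y - P *v y) \<bullet> (P *v x) = 0" "(x - P *v x) \<bullet> (P *v y) = 0"
    using P unfolding is_orthogonal_projection_def by blast+
  then show ?thesis
    using inner_commute[of "P *v x" "P *v y"] inner_commute[of y "P *v x"] inner_commute[of x "P *v y"]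
    unfolding inner_diff_left by linarith
qed

lemma orthogonal_projection_eq_0:
  assumes "\<forall>s\<in>S. y \<bullet> s = 0"
  shows "P *v y = 0"
proof -
  have "(y - P *v y) \<bullet> (P *v y) = 0" "y \<bullet> (P *v y) = 0"
    using P assms unfolding is_orthogonal_projection_def by blast+
  then show ?thesis by (simp add: inner_diff_left)
qed

end

subsection \<open>The pseudoinverse\<close>

lemma is_pinv_unique:
  assumes X: "is_pinv M X" and Z: "is_pinv M Z"
  shows "X = Z"
proof -
  note assoc = matrix_mul_assoc
  have X1: "M ** X ** M = M" "X ** M ** X = X" "transpose (M ** X) = M ** X" "transpose (X ** M) = X ** M"
    using X unfolding is_pinv_def by auto
  have Z1: "M ** Z ** M = M" "Z ** M ** Z = Z" "transpose (M ** Z) = M ** Z" "transpose (Z ** M) = Z ** M"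
    using Z unfolding is_pinv_def by auto
  have "Z ** M = transpose (Z ** M) ** transpose (X ** M)"
    using X1 Z1 by (metis assoc)
  also have "\<dots> = X ** M"
    using X1 Z1 by (metis assoc matrix_transpose_mul)
  finally have ZM: "Z ** M = X ** M" .
  have "M ** X = transpose (M ** Z) ** transpose (M ** X)"
    using X1 Z1 by (metis assoc)
  also have "\<dots> = M ** Z"
    using X1 Z1 by (metis assoc matrix_transpose_mul)
  finally have MX: "M ** X = M ** Z" .
  have "X = X ** M ** Z" using X1(2) MX by (metis assoc)
  also have "\<dots> = Z" using Z1(2) ZM by simp
  finally show ?thesis .
qed

lemma pinv_eqI: "is_pinv M X \<Longrightarrow> pinv M = X"
  unfolding pinv_def by (blast intro: the_equality is_pinv_unique)

lemma is_pinv_left_inverse_diff: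
  fixes M Q Y :: "real^'n^'n"
  assumes MQ: "M ** Q = 0" and QM: "Q ** M = 0" and QQ: "Q ** Q = Q"
    and Qsym: "transpose Q = Q" and Y: "Y ** (M + Q) = mat 1"
  shows "is_pinv M (Y - Q)"
proof -
  have Y': "(M + Q) ** Y = mat 1" using Y matrix_left_right_inverse by blast
  have "Q = (Q ** (M + Q)) ** Y" by (simp add: Y' flip: matrix_mul_assoc)
  then have QY: "Q ** Y = Q" by (simp add: matrix_add_ldistrib QM QQ)
  have "Y ** Q = Y ** ((M + Q) ** Q)" by (simp add: matrix_add_rdistrib MQ QQ)
  then have YQ: "Y ** Q = Q" by (simp add: matrix_mul_assoc Y)
  have MX: "M ** (Y - Q) = mat 1 - Q"
    using Y' by (simp add: matrix_diff_ldistrib matrix_add_rdistrib MQ QY eq_diff_eq)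
  have XM: "(Y - Q) ** M = mat 1 - Q"
    using Y by (simp add: matrix_diff_rdistrib matrix_add_ldistrib QM YQ eq_diff_eq)
  show ?thesis
    unfolding is_pinv_def MX XM
    by (simp add: matrix_diff_rdistrib matrix_diff_ldistrib transpose_diff transpose_mat QM QY QQ Qsym)
qed

lemma symmetric_is_pinv_pinv:
  fixes M :: "real^'n^'n"
  assumes sym: "transpose M = M"
  shows "is_pinv M (pinv M)"
proof -
  txt \<open>Adding the orthogonal projection Q onto the kernel makes M invertible, and
    (M + Q)^-1 - Q is then the pseudoinverse.\<close>
  define K where "K = {x. M *v x = 0}"
  have K: "subspace K"
    unfolding K_def by (simp add: linear_subspace_kernel matrix_vector_mul_linear)
  obtain Q where Q: "is_orthogonal_projection K Q"
    using orthogonal_projection_exists[OF K] by blast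
  have "M ** Q = 0"
    using Q by (simp add: matrix_eq K_def is_orthogonal_projection_def flip: matrix_vector_mul_assoc)
  moreover have QM: "Q ** M = 0"
    using orthogonal_projection_eq_0[OF K Q] symmetric_matrix_inner[OF sym]
    by (simp add: matrix_eq K_def flip: matrix_vector_mul_assoc)
  moreover have "Q ** Q = Q"
    using orthogonal_projection_idem[OF K Q] by (simp add: matrix_eq flip: matrix_vector_mul_assoc)
  moreover have "transpose Q = Q"
    using orthogonal_projection_self_adjoint[OF K Q] by (rule symmetric_matrixI)
  moreover have "x = 0" if "(M + Q) *v x = 0" for x
  proof -
    have Mx: "M *v x = - (Q *v x)"
      using that by (simp add: matrix_vector_mult_add_rdistrib eq_neg_iff_add_eq_0)
    have "(M *v x) \<bullet> (M *v x) = - (x \<bullet> (Q *v (M *v x)))"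
      by (metis Mx inner_minus_left orthogonal_projection_self_adjoint[OF K Q])
    also have "\<dots> = 0"
      using QM by (simp add: matrix_vector_mul_assoc)
    finally have "x \<in> K" "Q *v x = 0" using Mx by (simp_all add: K_def)
    then show "x = 0" using orthogonal_projection_fixes[OF K Q] by metis
  qed
  then obtain Y where "Y ** (M + Q) = mat 1"
    using matrix_left_invertible_ker by blast
  ultimately have "is_pinv M (Y - Q)" by (rule is_pinv_left_inverse_diff)
  then show ?thesis by (simp add: pinv_eqI)
qed

text \<open>The residual r = b - MXb is killed by the transpose of M, which makes it orthogonal both to b
  and to MXb.\<close>
lemma is_pinv_solves:
  fixes M :: "real^'n^'m"
  assumes X: "is_pinv M X" and b: "\<And>k. transpose M *v k = 0 \<Longrightarrow> b \<bullet> k = 0"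
  shows "M *v (X *v b) = b"
proof -
  define r where "r = b - M *v (X *v b)"
  have "transpose M ** (M ** X) = transpose (M ** X ** M)"
    using X unfolding is_pinv_def by (metis matrix_transpose_mul)
  then have "transpose M *v r = 0"
    using X unfolding is_pinv_def r_def
    by (simp add: matrix_vector_mult_diff_distrib matrix_vector_mul_assoc)
  then have "b \<bullet> r = 0" "r \<bullet> (M *v (X *v b)) = 0"
    using b transpose_mult_inner[of M r "X *v b"] by auto
  moreover have "r \<bullet> r = b \<bullet> r - r \<bullet> (M *v (X *v b))"
    unfolding r_def by (simp add: inner_diff_left inner_diff_right inner_commute)
  ultimately have "r \<bullet> r = 0" by simp
  then show ?thesis by (simp add: r_def)
qed

subsection \<open>Largest eigenvalue of a symmetric matrix\<close>

lemma eigenvalue_quadratic_form: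
  fixes M :: "real^'n^'n"
  assumes "\<mu> \<in> eigenvalues M"
  obtains u where "u \<bullet> u > 0" "u \<bullet> (M *v u) = \<mu> * (u \<bullet> u)"
  using assms unfolding eigenvalues_def by force

lemma symmetric_eigenvalues_finite:
  fixes M :: "real^'n^'n"
  assumes sym: "transpose M = M"
  shows "finite (eigenvalues M)"
proof -
  define ev where "ev \<mu> = (SOME u. u \<noteq> 0 \<and> M *v u = \<mu> *\<^sub>R u)" for \<mu>
  have ev: "ev \<mu> \<noteq> 0 \<and> M *v ev \<mu> = \<mu> *\<^sub>R ev \<mu>" if "\<mu> \<in> eigenvalues M" for \<mu>
    using that unfolding eigenvalues_def ev_def by (metis (mono_tags, lifting) mem_Collect_eq someI_ex)
  have inj: "inj_on ev (eigenvalues M)"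
    by (rule inj_onI) (metis ev scaleR_cancel_right)
  have "ev \<mu> \<bullet> ev \<nu> = 0" if "\<mu> \<in> eigenvalues M" "\<nu> \<in> eigenvalues M" "\<mu> \<noteq> \<nu>" for \<mu> \<nu>
  proof -
    have "\<mu> * (ev \<mu> \<bullet> ev \<nu>) = \<nu> * (ev \<mu> \<bullet> ev \<nu>)"
      using symmetric_matrix_inner[OF sym, of "ev \<mu>" "ev \<nu>"] ev[OF that(1)] ev[OF that(2)] by simp
    then show ?thesis using that(3) by simp
  qed
  then have "pairwise orthogonal (ev ` eigenvalues M)"
    unfolding pairwise_def orthogonal_def by blast
  moreover have "0 \<notin> ev ` eigenvalues M" using ev by auto
  ultimately have "finite (ev ` eigenvalues M)"
    using pairwise_orthogonal_independent independent_imp_finite by blast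
  then show ?thesis using finite_imageD inj by blast
qed

lemma psd_quadratic_form_eq_0_imp:
  fixes N :: "real^'n^'n"
  assumes sym: "transpose N = N" and psd: "\<And>x. 0 \<le> x \<bullet> (N *v x)"
    and v: "v \<bullet> (N *v v) = 0"
  shows "N *v v = 0"
proof (rule ccontr)
  define w where "w = N *v v"
  assume "N *v v \<noteq> 0"
  then have ww: "w \<bullet> w > 0" by (simp add: w_def)
  define c where "c = w \<bullet> (N *v w)"
  define t where "t = (w \<bullet> w) / (c + 1)"
  have c: "c \<ge> 0" using psd c_def by simp
  have t: "t > 0" using ww c by (simp add: t_def)
  have "(v - t *\<^sub>R w) \<bullet> (N *v (v - t *\<^sub>R w))
      = v \<bullet> (N *v v) - t * (v \<bullet> (N *v w)) - t * (w \<bullet> (N *v v)) + t\<^sup>2 * (w \<bullet> (N *v w))"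
    by (simp add: matrix_vector_mult_diff_distrib matrix_vector_mult_scaleR inner_diff_left
        inner_diff_right power2_eq_square algebra_simps)
  also have "\<dots> = t * (t * c - 2 * (w \<bullet> w))"
    using symmetric_matrix_inner[OF sym, of v w] v
    by (simp add: w_def[symmetric] c_def[symmetric] power2_eq_square algebra_simps)
  finally have "2 * (w \<bullet> w) \<le> t * c"
    using psd[of "v - t *\<^sub>R w"] t by (simp add: zero_le_mult_iff)
  moreover have "t * c < w \<bullet> w"
    unfolding t_def using ww c by (simp add: divide_less_eq mult_strict_left_mono)
  ultimately show False using ww by linarith
qed

text \<open>Rayleigh: if v maximises the quadratic form of M on the unit sphere, with maximum L, then
  L I - M is positive semidefinite with v in the null space of its form, so v is an eigenvector.\<close>
lemma symmetric_quadratic_form_le_eigenvalue: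
  fixes M :: "real^'n^'n"
  assumes sym: "transpose M = M"
  shows "\<exists>L\<in>eigenvalues M. \<forall>x. x \<bullet> (M *v x) \<le> L * (x \<bullet> x)"
proof -
  have "axis undefined 1 \<in> sphere (0::real^'n) 1"
    by simp
  then have "sphere (0::real^'n) 1 \<noteq> {}"
    by blast
  moreover have "continuous_on (sphere 0 1) (\<lambda>x. x \<bullet> (M *v x))"
    by (intro continuous_intros)
  ultimately obtain v where "v \<in> sphere 0 1"
    and "\<forall>y\<in>sphere 0 1. y \<bullet> (M *v y) \<le> v \<bullet> (M *v v)"
    using continuous_attains_sup[OF compact_sphere] by blast
  then have v: "norm v = 1" and vmax: "\<And>y. norm y = 1 \<Longrightarrow> y \<bullet> (M *v y) \<le> v \<bullet> (M *v v)"
    by simp_all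
  define L where "L = v \<bullet> (M *v v)"
  have bound: "x \<bullet> (M *v x) \<le> L * (x \<bullet> x)" for x
  proof (cases "x = 0")
    case False
    have "((1 / norm x) *\<^sub>R x) \<bullet> (M *v ((1 / norm x) *\<^sub>R x)) \<le> L"
      unfolding L_def using False by (intro vmax) simp
    moreover have "((1 / norm x) *\<^sub>R x) \<bullet> (M *v ((1 / norm x) *\<^sub>R x)) = (x \<bullet> (M *v x)) / (norm x)\<^sup>2"
      by (simp add: matrix_vector_mult_scaleR power2_eq_square)
    ultimately have "(x \<bullet> (M *v x)) / (norm x)\<^sup>2 \<le> L" by linarith
    then show ?thesis
      using False by (simp add: divide_le_eq dot_square_norm mult.commute)
  qed simp
  define N where "N = L *\<^sub>R mat 1 - M"
  have Nv: "N *v x = L *\<^sub>R x - M *v x" for x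
    by (simp add: N_def matrix_vector_mult_diff_rdistrib flip: scaleR_matrix_vector_assoc)
  have "N *v v = 0"
  proof (rule psd_quadratic_form_eq_0_imp)
    show "transpose N = N" by (rule symmetric_matrixI) (simp add: Nv inner_diff_left inner_diff_right symmetric_matrix_inner[OF sym])
    show "0 \<le> x \<bullet> (N *v x)" for x using bound[of x] by (simp add: Nv inner_diff_right)
    show "v \<bullet> (N *v v) = 0" using v by (simp add: Nv inner_diff_right L_def dot_square_norm)
  qed
  then have "M *v v = L *\<^sub>R v" by (simp add: Nv)
  moreover have "v \<noteq> 0" using v by auto
  ultimately have "L \<in> eigenvalues M" unfolding eigenvalues_def by blast
  then show ?thesis using bound by blast
qed

lemma lambda_max_symmetric:
  fixes M :: "real^'n^'n"
  assumes sym: "transpose M = M"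
  shows "lambda_max M \<in> eigenvalues M" "x \<bullet> (M *v x) \<le> lambda_max M * (x \<bullet> x)"
proof -
  obtain L where L: "L \<in> eigenvalues M" and bound: "\<And>x. x \<bullet> (M *v x) \<le> L * (x \<bullet> x)"
    using symmetric_quadratic_form_le_eigenvalue[OF sym] by blast
  have "\<mu> \<le> L" if \<mu>: "\<mu> \<in> eigenvalues M" for \<mu>
  proof -
    obtain u where "u \<bullet> u > 0" "u \<bullet> (M *v u) = \<mu> * (u \<bullet> u)"
      using eigenvalue_quadratic_form[OF \<mu>] by blast
    then show ?thesis using bound[of u] by (simp add: mult_le_cancel_right_pos)
  qed
  then have "lambda_max M = L"
    unfolding lambda_max_def using L symmetric_eigenvalues_finite[OF sym] by (intro Max_eqI) auto
  then show "lambda_max M \<in> eigenvalues M" "x \<bullet> (M *v x) \<le> lambda_max M * (x \<bullet> x)"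
    using L bound by simp_all
qed

lemma gram_eigenvalue_nonneg:
  fixes A :: "real^'n^'m"
  assumes "\<mu> \<in> eigenvalues (transpose A ** A)"
  shows "0 \<le> \<mu>"
proof -
  obtain u where u: "u \<bullet> u > 0" "u \<bullet> ((transpose A ** A) *v u) = \<mu> * (u \<bullet> u)"
    using eigenvalue_quadratic_form[OF assms] by blast
  then have "0 \<le> \<mu> * (u \<bullet> u)"
    by (metis gram_quadratic_form inner_ge_zero)
  then show ?thesis
    using u(1) by (simp add: zero_le_mult_iff)
qed

lemma sigma_max_square: "(sigma_max A)\<^sup>2 = lambda_max (transpose A ** A)"
  for A :: "real^'n^'m"
proof -
  define E where "E = eigenvalues (transpose A ** A)"
  have sym: "transpose (transpose A ** A) = transpose A ** A"
    by (simp add: matrix_transpose_mul)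
  have "finite E" "E \<noteq> {}"
    using symmetric_eigenvalues_finite[OF sym] lambda_max_symmetric(1)[OF sym] by (auto simp: E_def)
  then have "sigma_max A = sqrt (Max E)"
    unfolding sigma_max_def singular_values_def E_def[symmetric]
    by (simp add: mono_Max_commute monoI)
  moreover have "0 \<le> Max E"
    using Max_in[OF \<open>finite E\<close> \<open>E \<noteq> {}\<close>] gram_eigenvalue_nonneg by (simp add: E_def)
  ultimately show ?thesis by (simp add: lambda_max_def E_def)
qed

subsection \<open>The projection bound\<close>

lemma gram_solution_bound:
  fixes A :: "real^'n^'m"
  assumes y: "(transpose A ** A) *v y = b" and "b \<noteq> 0"
    and bound: "\<And>x. (A *v x) \<bullet> (A *v x) \<le> L * (x \<bullet> x)"
  shows "b \<bullet> b \<le> L * ((A *v y) \<bullet> (A *v y))"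
proof -
  define p where "p = (A *v y) \<bullet> (A *v y)"
  have bb: "b \<bullet> b > 0" using \<open>b \<noteq> 0\<close> by simp
  have "b \<bullet> b = (A *v y) \<bullet> (A *v b)"
    by (metis y transpose_mult_inner matrix_vector_mul_assoc)
  also have "\<dots> \<le> norm (A *v y) * norm (A *v b)"
    by (rule norm_cauchy_schwarz)
  finally have "(b \<bullet> b)\<^sup>2 \<le> p * ((A *v b) \<bullet> (A *v b))"
    using bb by (metis p_def power_mono power_mult_distrib power2_norm_eq_inner less_imp_le)
  also have "\<dots> \<le> p * (L * (b \<bullet> b))"
    using bound[of b] by (simp add: p_def mult_left_mono)
  finally show ?thesis
    using bb by (simp add: p_def power2_eq_square algebra_simps)
qed

theorem lemma4p8:
  fixes A :: "real^'n^'m" and c :: "real^'m"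
  assumes "(norm (transpose A *v c))\<^sup>2 \<in> \<int>"
    and "transpose A *v c \<noteq> 0"
  shows "(norm (proj_img A *v c))\<^sup>2 \<ge> 1 / (sigma_max A)\<^sup>2
         \<and> 1 / (sigma_max A)\<^sup>2 = 1 / lambda_max (transpose A ** A)"
proof -
  define M where "M = transpose A ** A"
  define b where "b = transpose A *v c"
  define y where "y = pinv M *v b"
  have sym: "transpose M = M" by (simp add: M_def matrix_transpose_mul)
  have "b \<bullet> k = 0" if "transpose M *v k = 0" for k
  proof -
    have "M *v k = 0" using that sym by simp
    then have "A *v k = 0" by (simp add: M_def gram_kernel)
    then show ?thesis by (simp only: b_def transpose_mult_inner inner_zero_right)
  qed
  then have "M *v y = b"
    unfolding y_def by (rule is_pinv_solves[OF symmetric_is_pinv_pinv[OF sym]])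
  then have "b \<bullet> b \<le> lambda_max M * ((A *v y) \<bullet> (A *v y))"
    using gram_solution_bound assms(2) lambda_max_symmetric(2)[OF sym]
    by (metis M_def b_def gram_quadratic_form)
  moreover have "1 \<le> b \<bullet> b"
    using assms Ints_nonzero_abs_ge1[of "b \<bullet> b"] by (simp add: b_def power2_norm_eq_inner)
  moreover have "proj_img A *v c = A *v y"
    unfolding proj_img_def y_def b_def M_def by (metis matrix_vector_mul_assoc)
  ultimately have bound: "1 \<le> lambda_max M * (norm (proj_img A *v c))\<^sup>2"
    by (simp add: power2_norm_eq_inner)
  then have "0 < lambda_max M"
    by (smt (verit) mult_nonpos_nonneg zero_le_power2)
  with bound show ?thesis
    by (simp add: sigma_max_square M_def divide_le_eq mult.commute)
qed

end
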